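(* Fix $\beta\in(0,1)$. Let $\{Z_k\}_{k\ge1}$ be i.i.d. $\mathrm{Bernoulli}(1/2)$, sampled once. Let $p(k)=c\,k^{-1/\beta}$ ($k\ge1$) with $c$ the normalizing constant. Let $X_n=((k_1,Z_{k_1}),\dots,(k_n,Z_{k_n}))$ and $Y_m=((k'_1,Z_{k'_1}),\dots,(k'_m,Z_{k'_m}))$, where $k_1,\dots,k_n,k'_1,\dots,k'_m$ are i.i.d. with law $p$, independent of the $Z$'s (both sequences use the same $Z$'s). Let $C_\beta>0$ be the constant such that $U(n)=\sum_{k\ge1}[1-(1-p(k))^n]\sim C_\beta n^\beta$ as $n\to\infty$. Then, to leading asymptotic order, $$I(X_n;Y_m)=C_\beta\left[n^\beta+m^\beta-(n+m)^\beta\right],$$ i.e. the process has generalized Hilberg (GHC) scaling $I(X_n;Y_m)\propto n^\beta+m^\beta-(n+m)^\beta$.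
   Context: $I(X;Y)=H(X)+H(Y)-H(X,Y)$ is Shannon mutual information with entropies in bits. $U(n)$ is the expected number of distinct indices among $n$ independent draws from $p$. *)

theory Defs
  imports "HOL-Probability.Probability"
begin

definition zipf_const :: "real \<Rightarrow> real" where
  "zipf_const \<beta> = 1 / (\<Sum>k. real (Suc k) powr (- 1 / \<beta>))"

definition zipf_p :: "real \<Rightarrow> nat \<Rightarrow> real" where
  "zipf_p \<beta> k = (if k \<ge> 1 then zipf_const \<beta> * real k powr (- 1 / \<beta>) else 0)"

definition zipf_pmf :: "real \<Rightarrow> nat pmf" where
  "zipf_pmf \<beta> = embed_pmf (zipf_p \<beta>)"

text \<open>Expected number of distinct indices among n i.i.d. draws from p.\<close>
definition U :: "real \<Rightarrow> nat \<Rightarrow> real" where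
  "U \<beta> n = (\<Sum>k. 1 - (1 - zipf_p \<beta> (Suc k)) ^ n)"

text \<open>Joint law of (X_n, Y_m): indices k_1..k_n,k'_1..k'_m i.i.d. p, and fair coins Z_k
  (shared by X and Y, independent of the indices); only the coins at drawn indices matter,
  so we sample the coin sequence restricted to the drawn index set.\<close>
definition XY_pmf :: "real \<Rightarrow> nat \<Rightarrow> nat \<Rightarrow> ((nat \<times> bool) list \<times> (nat \<times> bool) list) pmf" where
  "XY_pmf \<beta> n m = do {
     ks \<leftarrow> replicate_pmf (n + m) (zipf_pmf \<beta>);
     z \<leftarrow> Pi_pmf (set ks) False (\<lambda>_. bernoulli_pmf (1/2));
     return_pmf (map (\<lambda>k. (k, z k)) (take n ks), map (\<lambda>k. (k, z k)) (drop n ks)) }"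

definition shannon_entropy :: "'a pmf \<Rightarrow> real" where
  "shannon_entropy q = (\<Sum>\<^sub>\<infinity>x. - pmf q x * log 2 (pmf q x))"

definition mutual_info :: "('a \<times> 'b) pmf \<Rightarrow> real" where
  "mutual_info q = shannon_entropy (map_pmf fst q) + shannon_entropy (map_pmf snd q)
                   - shannon_entropy q"

end

theory Submission
  imports Defs "HOL-Real_Asymp.Real_Asymp"
begin

text \<open>
  The mutual information can be computed exactly. \<open>X\<^sub>n\<close> is the list of indices together with
  one fair coin per distinct index, so \<open>H(X\<^sub>n) = n H(p) + U(n)\<close>; the same holds for \<open>Y\<^sub>m\<close> and
  for the pair, which is a relabelling of \<open>X\<^sub>n\<^sub>+\<^sub>m\<close>. The index entropies cancel and
  \<open>I(X\<^sub>n; Y\<^sub>m) = U(n) + U(m) - U(n + m)\<close>.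

  For the power law, \<open>U\<close> differs by at most one from its Poissonized version \<open>\<Phi>\<close>, which is
  self-similar: \<open>L \<Phi>(x) \<le> \<Phi>(L\<^sup>1\<^sup>/\<^sup>\<beta> x) \<le> L \<Phi>(x) + L\<close>. Together with \<open>\<Phi>(y) \<sim> C y\<^sup>\<beta>\<close> this
  forces \<open>|U(n) - C n\<^sup>\<beta>| \<le> 1\<close> for every \<open>n\<close>. The error in the claimed asymptotics is therefore
  at most 3, while \<open>n\<^sup>\<beta> + m\<^sup>\<beta> - (n + m)\<^sup>\<beta> \<ge> (1 - \<beta>) min(n, m)\<^sup>\<beta>\<close> tends to infinity.
\<close>

section \<open>Entropy of discrete distributions\<close>

definition entropy_term :: "real \<Rightarrow> real" where
  "entropy_term x = - x * log 2 x"

definition has_entropy :: "'a pmf \<Rightarrow> real \<Rightarrow> bool" where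
  "has_entropy q h \<longleftrightarrow> ((\<lambda>x. entropy_term (pmf q x)) has_sum h) UNIV"

lemma entropy_term_0 [simp]: "entropy_term 0 = 0"
  by (simp add: entropy_term_def)

lemma entropy_term_nonneg: "0 \<le> x \<Longrightarrow> x \<le> 1 \<Longrightarrow> 0 \<le> entropy_term x"
  unfolding entropy_term_def
  by (cases "x = 0") (auto intro!: mult_nonneg_nonpos simp: log_le_zero_cancel_iff)

lemma entropy_term_mult:
  "0 \<le> x \<Longrightarrow> 0 \<le> y \<Longrightarrow> entropy_term (x * y) = x * entropy_term y + y * entropy_term x"
  unfolding entropy_term_def
  by (cases "x = 0"; cases "y = 0") (auto simp: log_mult algebra_simps)

lemma shannon_entropy_eqI: "has_entropy q h \<Longrightarrow> shannon_entropy q = h"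
  unfolding has_entropy_def shannon_entropy_def entropy_term_def by (simp add: infsumI)

lemma has_sum_pmf: "(pmf p has_sum measure_pmf.prob p A) A"
proof -
  have "pmf p summable_on A"
    using pmf_abs_summable[of p A] abs_summable_equivalent summable_on_iff_abs_summable_on_real
    by blast
  moreover have "infsum (pmf p) A = measure_pmf.prob p A"
    using infsetsum_infsum[OF pmf_abs_summable, of p A] measure_pmf_conv_infsetsum[of p A] by simp
  ultimately show ?thesis
    using has_sum_infsum by metis
qed

lemma has_sum_pmf_UNIV: "(pmf p has_sum 1) UNIV"
  using has_sum_pmf[of p UNIV] by simp

lemma has_entropy_map_pmf_inj:
  assumes "inj_on f (set_pmf q)"
  shows "has_entropy (map_pmf f q) h \<longleftrightarrow> has_entropy q h"
proof -
  let ?g = "\<lambda>y. entropy_term (pmf (map_pmf f q) y)"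
  have "(?g has_sum h) UNIV \<longleftrightarrow> (?g has_sum h) (f ` set_pmf q)"
    by (intro has_sum_cong_neutral) (auto simp: pmf_map_outside)
  also have "\<dots> \<longleftrightarrow> ((?g \<circ> f) has_sum h) (set_pmf q)"
    by (rule has_sum_reindex[OF assms])
  also have "\<dots> \<longleftrightarrow> ((\<lambda>x. entropy_term (pmf q x)) has_sum h) (set_pmf q)"
    by (intro has_sum_cong) (simp add: pmf_map_inj[OF assms])
  also have "\<dots> \<longleftrightarrow> ((\<lambda>x. entropy_term (pmf q x)) has_sum h) UNIV"
    by (intro has_sum_cong_neutral) (auto simp: set_pmf_eq)
  finally show ?thesis
    unfolding has_entropy_def .
qed

lemma has_entropy_pmf_of_set:
  assumes "finite S" "S \<noteq> {}"
  shows "has_entropy (pmf_of_set S) (log 2 (card S))"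
proof -
  have "((\<lambda>x. entropy_term (pmf (pmf_of_set S) x)) has_sum (\<Sum>x\<in>S. entropy_term (1 / card S))) S"
    using assms by (intro has_sum_finiteI) auto
  hence "((\<lambda>x. entropy_term (pmf (pmf_of_set S) x)) has_sum (\<Sum>x\<in>S. entropy_term (1 / card S))) UNIV"
    by (rule has_sum_cong_neutral[THEN iffD1, rotated -1]) (auto simp: assms)
  moreover have "(\<Sum>x\<in>S. entropy_term (1 / card S)) = log 2 (card S)"
    using assms by (simp add: entropy_term_def log_divide card_gt_0_iff)
  ultimately show ?thesis
    unfolding has_entropy_def by simp
qed

lemma pmf_bind_map_Pair:
  "pmf (D \<bind> (\<lambda>a. map_pmf (Pair a) (W a))) (a, b) = pmf D a * pmf (W a) b"
proof -
  have "pmf (map_pmf (Pair x) (W x)) (a, b) = indicator {a} x * pmf (W a) b" for x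
    by (cases "x = a") (auto simp: pmf_map_inj' inj_on_def pmf_eq_0_set_pmf)
  thus ?thesis
    by (simp add: pmf_bind measure_pmf_single)
qed

lemma has_entropy_bind_Pair:
  assumes D: "has_entropy D hD"
    and W: "\<And>a. has_entropy (W a) (hW a)"
    and cond: "((\<lambda>a. pmf D a * hW a) has_sum e) UNIV"
  shows "has_entropy (D \<bind> (\<lambda>a. map_pmf (Pair a) (W a))) (hD + e)"
proof -
  define f where
    "f = (\<lambda>(a, b). pmf D a * entropy_term (pmf (W a) b) + pmf (W a) b * entropy_term (pmf D a))"
  have fiber: "((\<lambda>b. f (a, b)) has_sum (pmf D a * hW a + entropy_term (pmf D a))) UNIV" for a
  proof -
    have "((\<lambda>b. pmf D a * entropy_term (pmf (W a) b)) has_sum (pmf D a * hW a)) UNIV"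
      using W[of a] unfolding has_entropy_def by (rule has_sum_cmult_right)
    moreover have
      "((\<lambda>b. pmf (W a) b * entropy_term (pmf D a)) has_sum (1 * entropy_term (pmf D a))) UNIV"
      using has_sum_pmf_UNIV by (rule has_sum_cmult_left)
    ultimately show ?thesis
      unfolding f_def by (simp add: has_sum_add)
  qed
  have total: "((\<lambda>a. pmf D a * hW a + entropy_term (pmf D a)) has_sum (e + hD)) UNIV"
    using cond D unfolding has_entropy_def by (rule has_sum_add)
  have "f x \<ge> 0" for x
    by (cases x)
      (auto simp: f_def intro!: add_nonneg_nonneg mult_nonneg_nonneg entropy_term_nonneg pmf_le_1)
  hence "f summable_on UNIV \<times> UNIV"
    using summable_on_SigmaI[OF fiber has_sum_imp_summable[OF total]] by auto
  hence "(f has_sum (e + hD)) (UNIV \<times> UNIV)"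
    by (intro has_sum_SigmaI[OF fiber total])
  moreover have "f = (\<lambda>x. entropy_term (pmf (D \<bind> (\<lambda>a. map_pmf (Pair a) (W a))) x))"
    by (auto simp: f_def pmf_bind_map_Pair entropy_term_mult)
  ultimately show ?thesis
    unfolding has_entropy_def by (simp add: add.commute)
qed

lemma has_entropy_pair_pmf:
  assumes "has_entropy A a" "has_entropy B b"
  shows "has_entropy (pair_pmf A B) (a + b)"
proof -
  have "pair_pmf A B = A \<bind> (\<lambda>x. map_pmf (Pair x) B)"
    by (simp add: pair_pmf_def map_pmf_def)
  moreover have "((\<lambda>x. pmf A x * b) has_sum (1 * b)) UNIV"
    by (rule has_sum_cmult_left[OF has_sum_pmf_UNIV])
  ultimately show ?thesis
    using has_entropy_bind_Pair[of A a "\<lambda>_. B" "\<lambda>_. b" b] assms by simp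
qed

lemma replicate_pmf_Suc_pair:
  "replicate_pmf (Suc n) p = map_pmf (\<lambda>(x, xs). x # xs) (pair_pmf p (replicate_pmf n p))"
  by (simp add: pair_pmf_def map_bind_pmf map_pmf_def bind_assoc_pmf bind_return_pmf)

lemma has_entropy_replicate_pmf:
  assumes "has_entropy p h"
  shows "has_entropy (replicate_pmf n p) (real n * h)"
proof (induction n)
  case 0
  show ?case
    using has_entropy_pmf_of_set[of "{[]}"] by (simp add: pmf_of_set_singleton)
next
  case (Suc n)
  have "inj_on (\<lambda>(x, xs). x # xs) S" for S :: "('a \<times> 'a list) set"
    by (auto simp: inj_on_def)
  moreover have "has_entropy (pair_pmf p (replicate_pmf n p)) (h + real n * h)"
    by (rule has_entropy_pair_pmf[OF assms Suc])
  ultimately show ?case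
    unfolding replicate_pmf_Suc_pair by (simp add: has_entropy_map_pmf_inj algebra_simps)
qed

section \<open>Lists labelled by fair coins\<close>

definition fair_coins :: "'a set \<Rightarrow> ('a \<Rightarrow> bool) pmf" where
  "fair_coins A = Pi_pmf A False (\<lambda>_. bernoulli_pmf (1/2))"

definition label :: "'a list \<Rightarrow> ('a \<Rightarrow> bool) \<Rightarrow> ('a \<times> bool) list" where
  "label ks z = map (\<lambda>k. (k, z k)) ks"

definition labelled :: "'a list pmf \<Rightarrow> ('a \<times> bool) list pmf" where
  "labelled D = D \<bind> (\<lambda>ks. map_pmf (label ks) (fair_coins (set ks)))"

lemma fair_coins_eq_pmf_of_set:
  assumes "finite A"
  shows "fair_coins A = pmf_of_set (PiE_dflt A False (\<lambda>_. UNIV))"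
proof -
  have "bernoulli_pmf (1/2) = pmf_of_set (UNIV :: bool set)"
    by (rule pmf_eqI) (simp add: UNIV_bool)
  thus ?thesis
    unfolding fair_coins_def using assms by (simp add: Pi_pmf_of_set)
qed

lemma has_entropy_fair_coins:
  assumes "finite A"
  shows "has_entropy (fair_coins A) (card A)"
proof -
  let ?S = "PiE_dflt A False (\<lambda>_. UNIV :: bool set)"
  have "card ?S = 2 ^ card A"
    using assms by (simp add: card_PiE_dflt card_UNIV_bool)
  moreover have "finite ?S" "?S \<noteq> {}"
    using assms by (auto intro: finite_PiE_dflt)
  ultimately show ?thesis
    using has_entropy_pmf_of_set[of ?S] assms
    by (simp add: fair_coins_eq_pmf_of_set log_nat_power)
qed

lemma fair_coins_outside:
  "finite A \<Longrightarrow> z \<in> set_pmf (fair_coins A) \<Longrightarrow> x \<notin> A \<Longrightarrow> z x = False"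
  unfolding fair_coins_def using set_Pi_pmf_subset[of A False] by blast

lemma map_pmf_fair_coins_subset:
  assumes "finite A" "B \<subseteq> A"
  shows "map_pmf (\<lambda>z x. if x \<in> B then z x else False) (fair_coins A) = fair_coins B"
  unfolding fair_coins_def using assms by (intro Pi_pmf_subset[symmetric])

text \<open>The pair \<open>(ks, z)\<close> can be read back from \<open>label ks z\<close> because \<open>z\<close> vanishes off \<open>set ks\<close>.\<close>
lemma has_entropy_labelled:
  assumes "has_entropy D h" "((\<lambda>ks. pmf D ks * card (set ks)) has_sum e) UNIV"
  shows "has_entropy (labelled D) (h + e)"
proof -
  let ?J = "D \<bind> (\<lambda>ks. map_pmf (Pair ks) (fair_coins (set ks)))"
  have eq: "labelled D = map_pmf (case_prod label) ?J"
    unfolding labelled_def map_bind_pmf map_pmf_comp by simp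
  have inj: "inj_on (case_prod label) (set_pmf ?J)"
  proof (rule inj_onI, clarify)
    fix ks z ks' z'
    assume "(ks, z) \<in> set_pmf ?J" "(ks', z') \<in> set_pmf ?J" and lab: "label ks z = label ks' z'"
    hence z: "z \<in> set_pmf (fair_coins (set ks))" and z': "z' \<in> set_pmf (fair_coins (set ks'))"
      by auto
    have ks: "ks = ks'"
      using arg_cong[OF lab, of "map fst"] by (simp add: label_def comp_def)
    have "z x = z' x" for x
    proof (cases "x \<in> set ks")
      case True
      then obtain i where "i < length ks" "ks ! i = x"
        by (auto simp: in_set_conv_nth)
      thus ?thesis
        using arg_cong[OF lab, of "\<lambda>l. l ! i"] ks by (simp add: label_def)
    next
      case False
      thus ?thesis
        using fair_coins_outside[OF _ z] fair_coins_outside[OF _ z'] ks by simp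
    qed
    thus "ks = ks' \<and> z = z'"
      using ks by auto
  qed
  have "has_entropy ?J (h + e)"
    using assms has_entropy_fair_coins by (intro has_entropy_bind_Pair) auto
  thus ?thesis
    unfolding eq using has_entropy_map_pmf_inj[OF inj] by simp
qed

text \<open>The coins at the discarded indices are independent of the others and can be forgotten.\<close>
lemma map_pmf_labelled_sublist:
  assumes label_commute: "\<And>ks z. g (label ks z) = label (f ks) z"
    and subset: "\<And>ks. set (f ks) \<subseteq> set ks"
  shows "map_pmf g (labelled D) = labelled (map_pmf f D)"
proof -
  have "map_pmf g (map_pmf (label ks) (fair_coins (set ks)))
      = map_pmf (label (f ks)) (fair_coins (set (f ks)))" for ks
  proof -
    let ?restrict = "\<lambda>z x. if x \<in> set (f ks) then z x else False"
    have "map_pmf g (map_pmf (label ks) (fair_coins (set ks)))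
        = map_pmf (\<lambda>z. label (f ks) (?restrict z)) (fair_coins (set ks))"
      unfolding map_pmf_comp
      by (intro map_pmf_cong refl) (simp add: label_commute, simp add: label_def)
    also have "\<dots> = map_pmf (label (f ks)) (map_pmf ?restrict (fair_coins (set ks)))"
      by (simp only: map_pmf_comp)
    also have "\<dots> = map_pmf (label (f ks)) (fair_coins (set (f ks)))"
      by (subst map_pmf_fair_coins_subset) (use subset in auto)
    finally show ?thesis .
  qed
  thus ?thesis
    unfolding labelled_def map_bind_pmf bind_map_pmf by simp
qed

lemma map_pmf_take_labelled: "map_pmf (take n) (labelled D) = labelled (map_pmf (take n) D)"
  by (rule map_pmf_labelled_sublist) (simp_all add: label_def take_map set_take_subset)

lemma map_pmf_drop_labelled: "map_pmf (drop n) (labelled D) = labelled (map_pmf (drop n) D)"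
  by (rule map_pmf_labelled_sublist) (simp_all add: label_def drop_map set_drop_subset)

section \<open>The number of distinct draws\<close>

definition expected_distinct :: "'a pmf \<Rightarrow> nat \<Rightarrow> real" where
  "expected_distinct p n = (\<Sum>\<^sub>\<infinity>x. 1 - (1 - pmf p x) ^ n)"

lemma prob_not_in_set_replicate_pmf:
  fixes p :: "'a::countable pmf"
  shows "measure_pmf.prob (replicate_pmf n p) {xs. x \<notin> set xs} = (1 - pmf p x) ^ n"
proof (induction n)
  case 0
  show ?case by simp
next
  case (Suc n)
  have "(\<lambda>(y, ys). y # ys) -` {xs. x \<notin> set xs} = (UNIV - {x}) \<times> {ys. x \<notin> set ys}"
    by auto
  hence "measure_pmf.prob (replicate_pmf (Suc n) p) {xs. x \<notin> set xs}
      = measure_pmf.prob (pair_pmf p (replicate_pmf n p)) ((UNIV - {x}) \<times> {ys. x \<notin> set ys})"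
    unfolding replicate_pmf_Suc_pair by simp
  also have "\<dots> = measure_pmf.prob p (UNIV - {x}) * (1 - pmf p x) ^ n"
    by (subst measure_pmf_prob_product) (auto simp: Suc)
  also have "measure_pmf.prob p (UNIV - {x}) = 1 - pmf p x"
    using measure_pmf.prob_compl[of "{x}" p] by (simp add: measure_pmf_single Compl_eq_Diff_UNIV)
  finally show ?case
    by simp
qed

lemma prob_in_set_replicate_pmf:
  fixes p :: "'a::countable pmf"
  shows "measure_pmf.prob (replicate_pmf n p) {xs. x \<in> set xs} = 1 - (1 - pmf p x) ^ n"
  using measure_pmf.prob_compl[of "{xs. x \<notin> set xs}" "replicate_pmf n p"]
  by (simp add: prob_not_in_set_replicate_pmf Compl_eq_Diff_UNIV[symmetric]
      Collect_neg_eq[symmetric])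

lemma one_minus_power_bounds:
  fixes q :: real
  assumes "0 \<le> q" "q \<le> 1"
  shows "0 \<le> 1 - (1 - q) ^ n" "1 - (1 - q) ^ n \<le> n * q"
  using power_le_one[of "1 - q" n] Bernoulli_inequality[of "- q" n] assms by auto

lemma has_sum_expected_distinct:
  "((\<lambda>x. 1 - (1 - pmf p x) ^ n) has_sum expected_distinct p n) UNIV"
proof -
  have "(\<lambda>x. n * pmf p x) summable_on UNIV"
    using has_sum_imp_summable[OF has_sum_pmf_UNIV] by (rule summable_on_cmult_right)
  hence "(\<lambda>x. 1 - (1 - pmf p x) ^ n) summable_on UNIV"
    by (rule summable_on_comparison_test)
      (use one_minus_power_bounds[OF pmf_nonneg pmf_le_1] in auto)
  thus ?thesis
    unfolding expected_distinct_def by (rule has_sum_infsum)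
qed

lemma has_sum_expected_card_set_replicate_pmf:
  fixes p :: "'a::countable pmf"
  shows "((\<lambda>xs. pmf (replicate_pmf n p) xs * card (set xs)) has_sum expected_distinct p n) UNIV"
proof -
  let ?R = "replicate_pmf n p"
  define F where "F = (\<lambda>(x, xs). pmf ?R xs * indicator {xs. x \<in> set xs} xs)"
  have by_element: "((\<lambda>xs. F (x, xs)) has_sum (1 - (1 - pmf p x) ^ n)) UNIV" for x
  proof -
    have "((\<lambda>xs. pmf ?R xs * indicator {xs. x \<in> set xs} xs)
        has_sum measure_pmf.prob ?R {xs. x \<in> set xs}) {xs. x \<in> set xs}"
      using has_sum_pmf by (rule has_sum_cong[THEN iffD1, rotated]) simp
    hence "((\<lambda>xs. pmf ?R xs * indicator {xs. x \<in> set xs} xs)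
        has_sum measure_pmf.prob ?R {xs. x \<in> set xs}) UNIV"
      by (rule has_sum_cong_neutral[THEN iffD1, rotated -1]) auto
    thus ?thesis
      by (simp add: F_def prob_in_set_replicate_pmf)
  qed
  have "F summable_on UNIV \<times> UNIV"
    using summable_on_SigmaI[OF by_element has_sum_imp_summable[OF has_sum_expected_distinct]]
    by (auto simp: F_def)
  hence "(F has_sum expected_distinct p n) (UNIV \<times> UNIV)"
    by (intro has_sum_SigmaI[OF by_element has_sum_expected_distinct])
  hence swapped: "((\<lambda>(xs, x). F (x, xs)) has_sum expected_distinct p n) (UNIV \<times> UNIV)"
    by (subst (asm) has_sum_swap) simp
  have by_list: "((\<lambda>x. F (x, xs)) has_sum (pmf ?R xs * card (set xs))) UNIV" for xs
  proof -
    have "((\<lambda>x. F (x, xs)) has_sum (\<Sum>x\<in>set xs. F (x, xs))) (set xs)"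
      by (intro has_sum_finiteI) auto
    hence "((\<lambda>x. F (x, xs)) has_sum (\<Sum>x\<in>set xs. F (x, xs))) UNIV"
      by (rule has_sum_cong_neutral[THEN iffD1, rotated -1]) (auto simp: F_def)
    thus ?thesis
      by (simp add: F_def mult.commute)
  qed
  show ?thesis
    using has_sum_SigmaD[OF swapped] by_list by simp
qed

lemma map_pmf_take_replicate_pmf: "map_pmf (take n) (replicate_pmf (n + m) p) = replicate_pmf n p"
proof -
  have "map_pmf (take n) (replicate_pmf (n + m) p)
      = replicate_pmf n p \<bind> (\<lambda>xs. replicate_pmf m p \<bind> (\<lambda>ys. return_pmf (take n (xs @ ys))))"
    by (simp add: replicate_pmf_distrib map_bind_pmf)
  also have "\<dots> = replicate_pmf n p \<bind> (\<lambda>xs. replicate_pmf m p \<bind> (\<lambda>_. return_pmf xs))"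
    by (intro bind_pmf_cong refl) (auto simp: set_replicate_pmf)
  finally show ?thesis
    by (simp add: bind_return_pmf')
qed

lemma map_pmf_drop_replicate_pmf: "map_pmf (drop n) (replicate_pmf (n + m) p) = replicate_pmf m p"
proof -
  have "map_pmf (drop n) (replicate_pmf (n + m) p)
      = replicate_pmf n p \<bind> (\<lambda>xs. replicate_pmf m p \<bind> (\<lambda>ys. return_pmf (drop n (xs @ ys))))"
    by (simp add: replicate_pmf_distrib map_bind_pmf)
  also have "\<dots> = replicate_pmf n p \<bind> (\<lambda>_. replicate_pmf m p \<bind> return_pmf)"
    by (intro bind_pmf_cong refl) (auto simp: set_replicate_pmf)
  finally show ?thesis
    by (simp add: bind_return_pmf')
qed

lemma mutual_info_take_drop_labelled:
  fixes p :: "'a::countable pmf"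
  assumes "has_entropy p h"
  shows "mutual_info (map_pmf (\<lambda>l. (take n l, drop n l)) (labelled (replicate_pmf (n + m) p)))
    = expected_distinct p n + expected_distinct p m - expected_distinct p (n + m)"
proof -
  let ?Q = "map_pmf (\<lambda>l. (take n l, drop n l)) (labelled (replicate_pmf (n + m) p))"
  have H: "has_entropy (labelled (replicate_pmf k p)) (k * h + expected_distinct p k)" for k
    using assms by (intro has_entropy_labelled has_entropy_replicate_pmf
        has_sum_expected_card_set_replicate_pmf)
  have "inj (\<lambda>l. (take n l, drop n l))"
    by (rule injI) (metis append_take_drop_id prod.inject)
  hence "has_entropy ?Q ((n + m) * h + expected_distinct p (n + m))"
    using H has_entropy_map_pmf_inj[OF inj_on_subset] by blast
  moreover have "map_pmf fst ?Q = labelled (replicate_pmf n p)"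
    by (simp add: map_pmf_comp map_pmf_take_labelled map_pmf_take_replicate_pmf)
  moreover have "map_pmf snd ?Q = labelled (replicate_pmf m p)"
    by (simp add: map_pmf_comp map_pmf_drop_labelled map_pmf_drop_replicate_pmf)
  ultimately show ?thesis
    unfolding mutual_info_def
    by (simp add: H[THEN shannon_entropy_eqI] shannon_entropy_eqI algebra_simps)
qed

section \<open>The Zipf law\<close>

lemma summable_entropy_term_power_law:
  fixes c s :: real
  assumes "c > 0" "s > 1"
  shows "summable (\<lambda>k. entropy_term (c * real k powr (- s)))"
proof (rule summable_comparison_test_bigo)
  show "summable (\<lambda>k. norm (real k powr (- ((1 + s) / 2))))"
    using assms by (simp add: summable_real_powr_iff)
  show "(\<lambda>k. entropy_term (c * real k powr (- s))) \<in> O(\<lambda>k. real k powr (- ((1 + s) / 2)))"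
    unfolding entropy_term_def using assms by real_asymp
qed

text \<open>No case split is needed since \<open>0 powr a = 0\<close>.\<close>
lemma zipf_p_eq: "zipf_p \<beta> k = zipf_const \<beta> * real k powr (- 1 / \<beta>)"
  by (simp add: zipf_p_def)

context
  fixes \<beta> :: real
  assumes \<beta>_pos: "0 < \<beta>" and \<beta>_less_1: "\<beta> < 1"
begin

lemma summable_zipf_weights: "summable (\<lambda>k. real (Suc k) powr (- 1 / \<beta>))"
proof -
  have "- 1 / \<beta> < -1"
    using \<beta>_pos \<beta>_less_1 by (simp add: field_simps)
  thus ?thesis
    using summable_Suc_iff[of "\<lambda>k. real k powr (- 1 / \<beta>)"] by (simp add: summable_real_powr_iff)
qed

lemma zipf_const_pos: "zipf_const \<beta> > 0"
  unfolding zipf_const_def using suminf_pos[OF summable_zipf_weights] by simp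

lemma zipf_p_nonneg: "zipf_p \<beta> k \<ge> 0"
  using zipf_const_pos by (simp add: zipf_p_eq)

lemma zipf_p_Suc_sums: "(\<lambda>k. zipf_p \<beta> (Suc k)) sums 1"
proof -
  have "(\<lambda>k. zipf_p \<beta> (Suc k)) sums (zipf_const \<beta> * (\<Sum>k. real (Suc k) powr (- 1 / \<beta>)))"
    unfolding zipf_p_eq by (intro sums_mult summable_sums summable_zipf_weights)
  thus ?thesis
    using suminf_pos[OF summable_zipf_weights] by (simp add: zipf_const_def)
qed

lemma pmf_zipf_pmf: "pmf (zipf_pmf \<beta>) k = zipf_p \<beta> k"
proof -
  have "zipf_p \<beta> sums 1"
    using zipf_p_Suc_sums sums_Suc_iff[of "zipf_p \<beta>"] by (simp add: zipf_p_def)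
  hence "(\<integral>\<^sup>+x. ennreal (zipf_p \<beta> x) \<partial>count_space UNIV) = 1"
    by (simp add: nn_integral_count_space_nat suminf_ennreal2 zipf_p_nonneg sums_unique[symmetric]
        sums_summable)
  thus ?thesis
    unfolding zipf_pmf_def by (intro pmf_embed_pmf zipf_p_nonneg)
qed

lemma has_entropy_zipf_pmf: "\<exists>h. has_entropy (zipf_pmf \<beta>) h"
proof -
  have "summable (\<lambda>k. entropy_term (zipf_p \<beta> k))"
    unfolding zipf_p_eq minus_divide_left[symmetric]
    using \<beta>_pos \<beta>_less_1 zipf_const_pos by (intro summable_entropy_term_power_law) auto
  hence "(\<lambda>k. entropy_term (pmf (zipf_pmf \<beta>) k)) summable_on UNIV"
    unfolding pmf_zipf_pmf by (subst summable_on_UNIV_nonneg_real_iff)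
      (auto intro: entropy_term_nonneg pmf_le_1 simp flip: pmf_zipf_pmf)
  thus ?thesis
    unfolding has_entropy_def summable_on_def by blast
qed

lemma U_eq_expected_distinct: "U \<beta> n = expected_distinct (zipf_pmf \<beta>) n"
proof -
  have "(\<lambda>k. 1 - (1 - zipf_p \<beta> k) ^ n) sums expected_distinct (zipf_pmf \<beta>) n"
    using has_sum_imp_sums[OF has_sum_expected_distinct[of "zipf_pmf \<beta>"]]
    by (simp add: pmf_zipf_pmf)
  hence "(\<lambda>k. 1 - (1 - zipf_p \<beta> (Suc k)) ^ n) sums expected_distinct (zipf_pmf \<beta>) n"
    using sums_Suc_iff[of "\<lambda>k. 1 - (1 - zipf_p \<beta> k) ^ n"] by (simp add: zipf_p_def)
  thus ?thesis
    unfolding U_def by (rule sums_unique[symmetric])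
qed

lemma XY_pmf_eq_labelled:
  "XY_pmf \<beta> n m
    = map_pmf (\<lambda>l. (take n l, drop n l)) (labelled (replicate_pmf (n + m) (zipf_pmf \<beta>)))"
  unfolding XY_pmf_def labelled_def map_bind_pmf map_pmf_comp
  by (simp add: map_pmf_def label_def take_map drop_map fair_coins_def)

lemma mutual_info_XY_pmf: "mutual_info (XY_pmf \<beta> n m) = U \<beta> n + U \<beta> m - U \<beta> (n + m)"
proof -
  obtain h where "has_entropy (zipf_pmf \<beta>) h"
    using has_entropy_zipf_pmf by blast
  thus ?thesis
    unfolding XY_pmf_eq_labelled U_eq_expected_distinct by (rule mutual_info_take_drop_labelled)
qed

end

section \<open>Occupancy under a power law\<close>

text \<open>The expected number of occupied cells when a Poisson(\<open>x\<close>) number of balls is thrown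
  independently into cells of probabilities \<open>w k\<close>.\<close>
definition poisson_occupancy :: "(nat \<Rightarrow> real) \<Rightarrow> real \<Rightarrow> real" where
  "poisson_occupancy w x = (\<Sum>k. 1 - exp (- x * w k))"

lemma power_Suc_diff_le:
  fixes a b :: real
  assumes "0 \<le> b" "b \<le> a"
  shows "a ^ Suc n - b ^ Suc n \<le> Suc n * (a - b) * a ^ n"
proof (induction n)
  case 0
  show ?case by simp
next
  case (Suc n)
  have "a ^ Suc (Suc n) - b ^ Suc (Suc n) = a * (a ^ Suc n - b ^ Suc n) + b ^ Suc n * (a - b)"
    by (simp add: algebra_simps)
  also have "\<dots> \<le> a * (Suc n * (a - b) * a ^ n) + a ^ Suc n * (a - b)"
    using assms Suc by (intro add_mono mult_left_mono mult_right_mono power_mono) auto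
  also have "\<dots> = Suc (Suc n) * (a - b) * a ^ Suc n"
    by (simp add: algebra_simps)
  finally show ?case .
qed

lemma exp_minus_le_one_minus_plus_square:
  fixes q :: real
  assumes "0 \<le> q"
  shows "exp (- q) \<le> 1 - q + q\<^sup>2"
proof -
  have "exp (- q) \<le> 1 / (1 + q)"
    using exp_ge_add_one_self[of q] assms by (simp add: exp_minus field_simps)
  also have "\<dots> \<le> 1 - q + q\<^sup>2"
    using assms by (simp add: field_simps power2_eq_square)
  finally show ?thesis .
qed

lemma exp_minus_power_bounds:
  fixes q :: real
  assumes q: "0 \<le> q" "q \<le> 1"
  shows "(1 - q) ^ n \<le> exp (- real n * q)" "exp (- real n * q) - (1 - q) ^ n \<le> q"
proof -
  have below: "1 - q \<le> exp (- q)"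
    using exp_ge_add_one_self[of "- q"] by simp
  have exp_power: "exp (- real k * q) = exp (- q) ^ k" for k
    by (simp add: exp_of_nat_mult[symmetric])
  show "(1 - q) ^ n \<le> exp (- real n * q)"
    unfolding exp_power using below q by (intro power_mono) auto
  show "exp (- real n * q) - (1 - q) ^ n \<le> q"
  proof (cases n)
    case 0
    thus ?thesis using q by simp
  next
    case (Suc m)
    have "exp (- real n * q) - (1 - q) ^ n \<le> n * (exp (- q) - (1 - q)) * exp (- real m * q)"
      unfolding exp_power Suc using below q by (intro power_Suc_diff_le) auto
    also have "\<dots> \<le> n * q\<^sup>2 * exp (- real m * q)"
      using exp_minus_le_one_minus_plus_square[OF q(1)]
      by (intro mult_right_mono mult_left_mono) auto
    also have "\<dots> = q * (n * q * exp (- real m * q))"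
      by (simp add: power2_eq_square)
    also have "\<dots> \<le> q"
    proof -
      have "n * q \<le> 1 + m * q"
        using q Suc by (simp add: algebra_simps)
      also have "\<dots> \<le> exp (m * q)"
        by (rule exp_ge_add_one_self)
      finally have "n * q * exp (- real m * q) \<le> 1"
        by (simp add: exp_minus field_simps)
      thus ?thesis
        using q by (simp add: mult_left_le)
    qed
    finally show ?thesis .
  qed
qed

context
  fixes w :: "nat \<Rightarrow> real"
  assumes w_nonneg: "\<And>k. 0 \<le> w k" and w_summable: "summable w"
begin

lemma summable_poisson_occupancy:
  assumes "0 \<le> x"
  shows "summable (\<lambda>k. 1 - exp (- x * w k))"
proof (rule summable_comparison_test'[of "\<lambda>k. x * w k" 0])
  show "summable (\<lambda>k. x * w k)"
    using w_summable by (rule summable_mult)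
  show "norm (1 - exp (- x * w k)) \<le> x * w k" for k
    using exp_ge_add_one_self[of "- x * w k"] assms w_nonneg[of k] by simp
qed

lemma poisson_occupancy_nonneg: "0 \<le> x \<Longrightarrow> 0 \<le> poisson_occupancy w x"
  unfolding poisson_occupancy_def using w_nonneg
  by (intro suminf_nonneg summable_poisson_occupancy) auto

lemma poisson_occupancy_mono: "0 \<le> x \<Longrightarrow> x \<le> y \<Longrightarrow> poisson_occupancy w x \<le> poisson_occupancy w y"
  unfolding poisson_occupancy_def using w_nonneg
  by (intro suminf_le summable_poisson_occupancy) (auto intro: mult_right_mono)

lemma occupancy_minus_poisson_occupancy:
  assumes w_sums: "w sums 1"
  shows "0 \<le> (\<Sum>k. 1 - (1 - w k) ^ n) - poisson_occupancy w n"
    and "(\<Sum>k. 1 - (1 - w k) ^ n) - poisson_occupancy w n \<le> 1"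
proof -
  have w_le_1: "w k \<le> 1" for k
    using sum_le_suminf[of w "{k}"] w_sums w_nonneg by (simp add: sums_iff)
  note bounds = exp_minus_power_bounds[OF w_nonneg w_le_1]
  have "summable (\<lambda>k. 1 - (1 - w k) ^ n)"
    by (rule summable_comparison_test'[of "\<lambda>k. n * w k" 0])
      (use w_summable one_minus_power_bounds[OF w_nonneg w_le_1] in \<open>auto intro: summable_mult\<close>)
  hence "(\<lambda>k. (1 - (1 - w k) ^ n) - (1 - exp (- real n * w k)))
      sums ((\<Sum>k. 1 - (1 - w k) ^ n) - poisson_occupancy w n)"
    unfolding poisson_occupancy_def
    by (intro sums_diff summable_sums summable_poisson_occupancy) auto
  hence diff_sums: "(\<lambda>k. exp (- real n * w k) - (1 - w k) ^ n)
      sums ((\<Sum>k. 1 - (1 - w k) ^ n) - poisson_occupancy w n)"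
    by simp
  show "0 \<le> (\<Sum>k. 1 - (1 - w k) ^ n) - poisson_occupancy w n"
    using sums_le[OF _ sums_zero diff_sums] bounds(1) by simp
  show "(\<Sum>k. 1 - (1 - w k) ^ n) - poisson_occupancy w n \<le> 1"
    using sums_le[OF _ diff_sums w_sums] bounds(2) by simp
qed

end

lemma power_law_occupancy_antimono:
  fixes a s x t t' :: real
  assumes "0 < a" "0 < s" "0 \<le> x" "0 < t" "t \<le> t'"
  shows "1 - exp (- x * a * t' powr (- s)) \<le> 1 - exp (- x * a * t powr (- s))"
proof -
  have "t' powr (- s) \<le> t powr (- s)"
    using assms by (intro powr_mono2') auto
  thus ?thesis
    using assms by (simp add: mult_left_mono)
qed

lemma sum_block_antimono_bounds:
  fixes g :: "real \<Rightarrow> real" and L n :: nat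
  assumes antimono: "\<And>t t'. 0 < t \<Longrightarrow> t \<le> t' \<Longrightarrow> g t' \<le> g t"
    and le_1: "\<And>t. g t \<le> 1" and L: "0 < L"
  shows "L * g (Suc n) \<le> (\<Sum>j\<in>{n * L..<n * L + L}. g (real (Suc j) / L))"
    and "(\<Sum>j\<in>{n * L..<n * L + L}. g (real (Suc j) / L)) \<le> L * (if n = 0 then 1 else g n)"
proof -
  have "g (Suc n) \<le> g (real (Suc j) / L)" "g (real (Suc j) / L) \<le> (if n = 0 then 1 else g n)"
    if "j \<in> {n * L..<n * L + L}" for j
  proof -
    from that have "n * L < Suc j" "Suc j \<le> n * L + L"
      by simp_all
    hence "real (n * L) < real (Suc j)" "real (Suc j) \<le> real (n * L + L)"
      by (simp_all only: of_nat_less_iff of_nat_le_iff)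
    hence "n < real (Suc j) / L" "real (Suc j) / L \<le> Suc n"
      using L by (simp_all add: field_simps)
    thus "g (Suc n) \<le> g (real (Suc j) / L)" "g (real (Suc j) / L) \<le> (if n = 0 then 1 else g n)"
      using antimono le_1 L by auto
  qed
  thus "L * g (Suc n) \<le> (\<Sum>j\<in>{n * L..<n * L + L}. g (real (Suc j) / L))"
    "(\<Sum>j\<in>{n * L..<n * L + L}. g (real (Suc j) / L)) \<le> L * (if n = 0 then 1 else g n)"
    using sum_mono[of "{n * L..<n * L + L}" "\<lambda>_. g (Suc n)"]
      sum_mono[of "{n * L..<n * L + L}" _ "\<lambda>_. if n = 0 then 1 else g n"] by auto
qed

text \<open>Multiplying the intensity by \<open>L powr s\<close> amounts to refining the index scale by \<open>L\<close>:
  index \<open>k\<close> splits into the \<open>L\<close> new indices in \<open>(k - 1, k]\<close>.\<close>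
lemma poisson_occupancy_power_law_scaling:
  fixes a s x :: real and L :: nat
  assumes a: "0 < a" and s: "1 < s" and x: "0 \<le> x" and L: "0 < L"
  defines "w \<equiv> \<lambda>k. a * real (Suc k) powr (- s)"
  shows "L * poisson_occupancy w x \<le> poisson_occupancy w (L powr s * x)"
    and "poisson_occupancy w (L powr s * x) \<le> L * poisson_occupancy w x + L"
proof -
  define g where "g t = 1 - exp (- x * a * t powr (- s))" for t
  have w_summable: "summable w"
    unfolding w_def using s summable_Suc_iff[of "\<lambda>k. real k powr (- s)"]
    by (intro summable_mult) (simp add: summable_real_powr_iff)
  have w_nonneg: "0 \<le> w k" for k
    unfolding w_def using a by simp
  have g_sums: "(\<lambda>k. g (Suc k)) sums poisson_occupancy w x"
    using summable_poisson_occupancy[OF w_nonneg w_summable x]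
    unfolding poisson_occupancy_def g_def w_def by (simp add: summable_sums algebra_simps)
  have "g (real (Suc j) / L) = 1 - exp (- (L powr s * x) * w j)" for j
    using L by (simp add: g_def w_def powr_divide powr_minus field_simps)
  hence "(\<lambda>j. g (real (Suc j) / L)) sums poisson_occupancy w (L powr s * x)"
    using summable_poisson_occupancy[OF w_nonneg w_summable, of "L powr s * x"] x
    unfolding poisson_occupancy_def by (simp add: summable_sums)
  hence blocks: "(\<lambda>n. \<Sum>j\<in>{n * L..<n * L + L}. g (real (Suc j) / L))
      sums poisson_occupancy w (L powr s * x)"
    using L by (rule sums_group)
  have g_antimono: "g t' \<le> g t" if "0 < t" "t \<le> t'" for t t'
    unfolding g_def using a s x that by (intro power_law_occupancy_antimono) auto
  have g_le_1: "g t \<le> 1" for t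
    by (simp add: g_def)
  note block_bounds = sum_block_antimono_bounds[of g, OF g_antimono g_le_1 L]
  have lower: "(\<lambda>n. L * g (Suc n)) sums (L * poisson_occupancy w x)"
    by (intro sums_mult g_sums)
  show "L * poisson_occupancy w x \<le> poisson_occupancy w (L powr s * x)"
    by (rule sums_le[OF block_bounds(1) lower blocks])
  have upper: "(\<lambda>n. L * (if n = 0 then 1 else g n)) sums (L * poisson_occupancy w x + L)"
    using lower sums_Suc_iff[of "\<lambda>n. L * (if n = 0 then 1 else g n)"] by simp
  show "poisson_occupancy w (L powr s * x) \<le> L * poisson_occupancy w x + L"
    by (rule sums_le[OF block_bounds(2) blocks upper])
qed

lemma tendsto_div_powr_at_top_of_nat:
  fixes f :: "real \<Rightarrow> real" and \<beta> C :: real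
  assumes \<beta>: "0 < \<beta>"
    and mono: "\<And>x y. 0 \<le> x \<Longrightarrow> x \<le> y \<Longrightarrow> f x \<le> f y"
    and nonneg: "\<And>x. 0 \<le> x \<Longrightarrow> 0 \<le> f x"
    and lim: "(\<lambda>n. f (real n) / real n powr \<beta>) \<longlonglongrightarrow> C"
  shows "((\<lambda>y. f y / y powr \<beta>) \<longlongrightarrow> C) at_top"
proof -
  define lo where "lo n = f (real n) / real n powr \<beta> * (real n / (real n + 1)) powr \<beta>" for n :: nat
  define hi where "hi n = f (real (Suc n)) / real (Suc n) powr \<beta> * (real (Suc n) / real n) powr \<beta>"
    for n :: nat
  have floor_at_top: "filterlim (\<lambda>y::real. nat \<lfloor>y\<rfloor>) at_top at_top"
    by (rule filterlim_compose[OF filterlim_nat_sequentially filterlim_floor_sequentially])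
  have "lo \<longlonglongrightarrow> C * 1"
    unfolding lo_def by (intro tendsto_mult lim) (use \<beta> in real_asymp)
  from filterlim_compose[OF this floor_at_top]
  have lo_lim: "((\<lambda>y::real. lo (nat \<lfloor>y\<rfloor>)) \<longlongrightarrow> C) at_top"
    by simp
  have "hi \<longlonglongrightarrow> C * 1"
    unfolding hi_def by (intro tendsto_mult LIMSEQ_Suc[OF lim]) (use \<beta> in real_asymp)
  from filterlim_compose[OF this floor_at_top]
  have hi_lim: "((\<lambda>y::real. hi (nat \<lfloor>y\<rfloor>)) \<longlongrightarrow> C) at_top"
    by simp
  have "lo (nat \<lfloor>y\<rfloor>) \<le> f y / y powr \<beta> \<and> f y / y powr \<beta> \<le> hi (nat \<lfloor>y\<rfloor>)" if "1 \<le> y" for y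
  proof -
    define n where "n = nat \<lfloor>y\<rfloor>"
    have n: "1 \<le> n" "real n \<le> y" "y \<le> real n + 1"
      using that by (simp_all add: n_def le_nat_iff)
    have "lo n = f (real n) / (real n + 1) powr \<beta>" "hi n = f (real n + 1) / real n powr \<beta>"
      unfolding lo_def hi_def using n by (simp_all add: powr_divide add.commute)
    moreover have "f (real n) \<le> f y" "f y \<le> f (real n + 1)" "0 \<le> f (real n)"
      using n by (auto intro: mono nonneg)
    moreover have "f (real n) / (real n + 1) powr \<beta> \<le> f y / y powr \<beta>"
      using calculation(3-) n \<beta> by (intro frac_le) (auto intro: powr_mono2)
    moreover have "f y / y powr \<beta> \<le> f (real n + 1) / real n powr \<beta>"
      using calculation(3-) n \<beta> by (intro frac_le) (auto intro: powr_mono2)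
    ultimately show ?thesis
      by (simp add: n_def)
  qed
  hence bounds: "\<forall>\<^sub>F y in at_top. lo (nat \<lfloor>y\<rfloor>) \<le> f y / y powr \<beta> \<and> f y / y powr \<beta> \<le> hi (nat \<lfloor>y\<rfloor>)"
    using eventually_ge_at_top[of "1::real"] by (rule eventually_mono[rotated])
  show ?thesis
    by (rule tendsto_sandwich[OF _ _ lo_lim hi_lim]) (use bounds in \<open>auto elim: eventually_mono\<close>)
qed

text \<open>Let \<open>L \<rightarrow> \<infinity>\<close>: the middle term of \<open>L f x \<le> f (L powr (1/\<beta>) x) \<le> L (f x + 1)\<close> is
  asymptotic to \<open>C L x powr \<beta>\<close>.\<close>
lemma powr_bounds_of_scaling:
  fixes f :: "real \<Rightarrow> real" and \<beta> C x :: real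
  assumes \<beta>: "0 < \<beta>" and x: "0 < x"
    and lim: "((\<lambda>y. f y / y powr \<beta>) \<longlongrightarrow> C) at_top"
    and scaling: "\<And>L. (0::nat) < L \<Longrightarrow>
      L * f x \<le> f (L powr (1 / \<beta>) * x) \<and> f (L powr (1 / \<beta>) * x) \<le> L * f x + L"
  shows "f x \<le> C * x powr \<beta>" "C * x powr \<beta> \<le> f x + 1"
proof -
  define y where "y L = L powr (1 / \<beta>) * x" for L :: nat
  have "filterlim y at_top sequentially"
    unfolding y_def using \<beta> x by real_asymp
  hence "(\<lambda>L. f (y L) / y L powr \<beta> * x powr \<beta>) \<longlonglongrightarrow> C * x powr \<beta>"
    by (intro tendsto_mult tendsto_const filterlim_compose[OF lim])
  moreover have "\<forall>\<^sub>F L in sequentially. f (y L) / y L powr \<beta> * x powr \<beta> = f (y L) / L"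
    using eventually_gt_at_top[of "0::nat"]
    by eventually_elim (use \<beta> x in \<open>simp add: y_def powr_mult powr_powr\<close>)
  ultimately have lim_y: "(\<lambda>L. f (y L) / L) \<longlonglongrightarrow> C * x powr \<beta>"
    by (rule Lim_transform_eventually)
  have bounds: "\<forall>\<^sub>F L in sequentially. f x \<le> f (y L) / L \<and> f (y L) / L \<le> f x + 1"
    using eventually_gt_at_top[of "0::nat"]
  proof eventually_elim
    case (elim L)
    thus ?case
      using scaling[of L] by (simp add: y_def field_simps)
  qed
  show "f x \<le> C * x powr \<beta>"
    by (rule tendsto_le[OF trivial_limit_sequentially lim_y tendsto_const])
      (use bounds in \<open>auto elim: eventually_mono\<close>)
  show "C * x powr \<beta> \<le> f x + 1"
    by (rule tendsto_le[OF trivial_limit_sequentially tendsto_const lim_y])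
      (use bounds in \<open>auto elim: eventually_mono\<close>)
qed

lemma zipf_poisson_occupancy_powr_bounds:
  fixes \<beta> C x :: real
  defines "\<Phi> \<equiv> poisson_occupancy (\<lambda>k. zipf_p \<beta> (Suc k))"
  assumes \<beta>: "0 < \<beta>" "\<beta> < 1" and x: "0 < x"
    and lim: "(\<lambda>n. \<Phi> (real n) / real n powr \<beta>) \<longlonglongrightarrow> C"
  shows "\<Phi> x \<le> C * x powr \<beta>" "C * x powr \<beta> \<le> \<Phi> x + 1"
proof -
  have w_nonneg: "0 \<le> zipf_p \<beta> (Suc k)" for k
    using \<beta> by (rule zipf_p_nonneg)
  have w_summable: "summable (\<lambda>k. zipf_p \<beta> (Suc k))"
    using zipf_p_Suc_sums[OF \<beta>] by (rule sums_summable)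
  have "((\<lambda>y. \<Phi> y / y powr \<beta>) \<longlongrightarrow> C) at_top"
    using \<beta> lim unfolding \<Phi>_def
    by (intro tendsto_div_powr_at_top_of_nat poisson_occupancy_mono poisson_occupancy_nonneg
        w_nonneg w_summable)
  moreover have "L * \<Phi> x \<le> \<Phi> (L powr (1 / \<beta>) * x) \<and> \<Phi> (L powr (1 / \<beta>) * x) \<le> L * \<Phi> x + L"
    if "0 < L" for L :: nat
  proof -
    have power_law: "(\<lambda>k. zipf_p \<beta> (Suc k)) = (\<lambda>k. zipf_const \<beta> * real (Suc k) powr (- (1 / \<beta>)))"
      by (simp add: fun_eq_iff zipf_p_eq)
    show ?thesis
      unfolding \<Phi>_def power_law using \<beta> x that zipf_const_pos[OF \<beta>]
      by (intro conjI poisson_occupancy_power_law_scaling) auto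
  qed
  ultimately show "\<Phi> x \<le> C * x powr \<beta>" "C * x powr \<beta> \<le> \<Phi> x + 1"
    using powr_bounds_of_scaling[OF \<beta>(1) x] by blast+
qed

lemma U_minus_zipf_poisson_occupancy:
  fixes \<beta> :: real
  assumes "0 < \<beta>" "\<beta> < 1"
  shows "0 \<le> U \<beta> n - poisson_occupancy (\<lambda>k. zipf_p \<beta> (Suc k)) n"
    and "U \<beta> n - poisson_occupancy (\<lambda>k. zipf_p \<beta> (Suc k)) n \<le> 1"
  unfolding U_def
  using occupancy_minus_poisson_occupancy[OF zipf_p_nonneg[OF assms] sums_summable zipf_p_Suc_sums]
    zipf_p_Suc_sums[OF assms] assms by auto

lemma tendsto_zipf_poisson_occupancy_div_powr:
  fixes \<beta> C :: real
  assumes \<beta>: "0 < \<beta>" "\<beta> < 1" and C: "0 < C"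
    and U_equiv: "(\<lambda>n. U \<beta> n) \<sim>[at_top] (\<lambda>n. C * real n powr \<beta>)"
  shows "(\<lambda>n. poisson_occupancy (\<lambda>k. zipf_p \<beta> (Suc k)) n / real n powr \<beta>) \<longlonglongrightarrow> C"
proof -
  define \<Phi> where "\<Phi> = poisson_occupancy (\<lambda>k. zipf_p \<beta> (Suc k))"
  have "(\<lambda>n. U \<beta> n / (C * real n powr \<beta>)) \<longlonglongrightarrow> 1"
    using U_equiv by (rule asymp_equivD_strong)
      (use C in \<open>auto intro: eventually_mono[OF eventually_gt_at_top[of 0]]\<close>)
  from tendsto_mult[OF tendsto_const[of C] this]
  have U_lim: "(\<lambda>n. U \<beta> n / real n powr \<beta>) \<longlonglongrightarrow> C"
    using C by simp
  have "(\<lambda>n. (U \<beta> n - \<Phi> n) / real n powr \<beta>) \<longlonglongrightarrow> 0"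
  proof (rule Lim_null_comparison)
    show "(\<lambda>n::nat. 1 / real n powr \<beta>) \<longlonglongrightarrow> 0"
      using \<beta> by real_asymp
    show "\<forall>\<^sub>F n in sequentially. norm ((U \<beta> n - \<Phi> n) / real n powr \<beta>) \<le> 1 / real n powr \<beta>"
      using U_minus_zipf_poisson_occupancy[OF \<beta>] unfolding \<Phi>_def
      by (intro always_eventually allI) (simp add: divide_right_mono)
  qed
  from tendsto_diff[OF U_lim this]
  show ?thesis
    unfolding \<Phi>_def by (simp add: diff_divide_distrib)
qed

lemma U_minus_powr_bound:
  fixes \<beta> C :: real
  assumes "0 < \<beta>" "\<beta> < 1" "0 < C"
    and "(\<lambda>n. U \<beta> n) \<sim>[at_top] (\<lambda>n. C * real n powr \<beta>)"
  shows "\<bar>U \<beta> n - C * real n powr \<beta>\<bar> \<le> 1"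
proof (cases "n = 0")
  case True
  thus ?thesis by (simp add: U_def)
next
  case False
  hence "0 < real n"
    by simp
  from zipf_poisson_occupancy_powr_bounds[OF assms(1,2) this
      tendsto_zipf_poisson_occupancy_div_powr[OF assms]]
  show ?thesis
    using U_minus_zipf_poisson_occupancy[OF assms(1,2), of n] by linarith
qed

section \<open>Asymptotics of the mutual information\<close>

lemma powr_add_gap_lower_bound_of_le:
  fixes \<beta> a b :: real
  assumes \<beta>: "0 < \<beta>" "\<beta> < 1" and ab: "0 < a" "a \<le> b"
  shows "(1 - \<beta>) * a powr \<beta> \<le> a powr \<beta> + b powr \<beta> - (a + b) powr \<beta>"
proof -
  have "0 < 1 + a / b"
    using ab by (simp add: add_pos_pos)
  hence concave: "(1 + a / b) powr \<beta> \<le> 1 + \<beta> * (a / b)"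
    using Youngs_inequality_0[of \<beta> "1 - \<beta>" "1 + a / b" 1] \<beta> by (simp add: algebra_simps)
  have "a + b = b * (1 + a / b)"
    using ab by (simp add: field_simps)
  hence "(a + b) powr \<beta> = b powr \<beta> * (1 + a / b) powr \<beta>"
    using ab by (simp add: powr_mult)
  also have "\<dots> \<le> b powr \<beta> * (1 + \<beta> * (a / b))"
    using concave by (intro mult_left_mono) auto
  also have "\<dots> = b powr \<beta> + \<beta> * (a * (b powr \<beta> / b))"
    by (simp add: algebra_simps)
  also have "b powr \<beta> / b = b powr (\<beta> - 1)"
    using ab by (simp add: powr_diff)
  also have "a * b powr (\<beta> - 1) \<le> a * a powr (\<beta> - 1)"
    using ab \<beta> by (intro mult_left_mono powr_mono2') auto
  also have "a * a powr (\<beta> - 1) = a powr \<beta>"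
    using ab by (simp add: powr_diff)
  finally show ?thesis
    using \<beta> by (simp add: algebra_simps)
qed

lemma powr_add_gap_lower_bound:
  fixes \<beta> a b :: real
  assumes "0 < \<beta>" "\<beta> < 1" "0 < a" "0 < b"
  shows "(1 - \<beta>) * min a b powr \<beta> \<le> a powr \<beta> + b powr \<beta> - (a + b) powr \<beta>"
  using powr_add_gap_lower_bound_of_le[of \<beta> a b] powr_add_gap_lower_bound_of_le[of \<beta> b a] assms
  by (cases "a \<le> b") (simp_all add: min_def algebra_simps)

lemma asymp_equiv_of_bounded_diff:
  fixes f g :: "'a \<Rightarrow> real"
  assumes g: "filterlim g at_top F" and bounded: "eventually (\<lambda>x. \<bar>f x - g x\<bar> \<le> K) F"
  shows "f \<sim>[F] g"
proof (rule smallo_imp_asymp_equiv)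
  have "(\<lambda>x. f x - g x) \<in> O[F](\<lambda>_. 1)"
    using bounded by (intro bigoI[of _ K]) (auto elim: eventually_mono)
  moreover have "(\<lambda>_. 1) \<in> o[F](g)"
  proof (rule smalloI_tendsto)
    show "((\<lambda>x. 1 / g x) \<longlongrightarrow> 0) F"
      using tendsto_inverse_0_at_top[OF g] by (simp add: inverse_eq_divide)
    have "eventually (\<lambda>x. 0 < g x) F"
      using g by (simp add: filterlim_at_top_dense)
    thus "eventually (\<lambda>x. g x \<noteq> 0) F"
      by (auto elim: eventually_mono)
  qed
  ultimately show "(\<lambda>x. f x - g x) \<in> o[F](g)"
    by (rule landau_o.big_small_trans)
qed

lemma filterlim_min_at_top_prod:
  "filterlim (\<lambda>x. min (fst x) (snd x)) at_top (at_top \<times>\<^sub>F at_top :: (nat \<times> nat) filter)"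
  unfolding filterlim_at_top eventually_prod_sequentially by auto

lemma filterlim_powr_add_gap_at_top:
  fixes \<beta> C :: real
  assumes \<beta>: "0 < \<beta>" "\<beta> < 1" and C: "0 < C"
  shows "filterlim (\<lambda>(n::nat, m::nat). C * (real n powr \<beta> + real m powr \<beta> - real (n + m) powr \<beta>))
    at_top (at_top \<times>\<^sub>F at_top)"
proof (rule filterlim_at_top_mono)
  have "filterlim (\<lambda>k::nat. C * (1 - \<beta>) * real k powr \<beta>) at_top at_top"
    using \<beta> C by real_asymp
  thus "filterlim (\<lambda>x. C * (1 - \<beta>) * real (min (fst x) (snd x)) powr \<beta>) at_top (at_top \<times>\<^sub>F at_top)"
    by (rule filterlim_compose[OF _ filterlim_min_at_top_prod])
  show "\<forall>\<^sub>F x in at_top \<times>\<^sub>F at_top. C * (1 - \<beta>) * real (min (fst x) (snd x)) powr \<beta>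
      \<le> (case x of (n, m) \<Rightarrow> C * (real n powr \<beta> + real m powr \<beta> - real (n + m) powr \<beta>))"
    unfolding eventually_prod_sequentially
    using \<beta> C powr_add_gap_lower_bound[of \<beta> "real _" "real _"]
    by (intro exI[of _ 1]) (auto intro!: mult_left_mono simp: of_nat_min)
qed

lemma mutual_info_XY_pmf_error_bound:
  fixes \<beta> C :: real
  assumes "0 < \<beta>" "\<beta> < 1" "0 < C"
    and "(\<lambda>n. U \<beta> n) \<sim>[at_top] (\<lambda>n. C * real n powr \<beta>)"
  shows "\<bar>mutual_info (XY_pmf \<beta> n m)
    - C * (real n powr \<beta> + real m powr \<beta> - real (n + m) powr \<beta>)\<bar> \<le> 3"
  using U_minus_powr_bound[OF assms, of n] U_minus_powr_bound[OF assms, of m]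
    U_minus_powr_bound[OF assms, of "n + m"]
  unfolding mutual_info_XY_pmf[OF assms(1,2)] right_diff_distrib distrib_left by linarith

theorem mainTheorem9:
  fixes \<beta> C :: real
  assumes "0 < \<beta>" and "\<beta> < 1"
    and "C > 0"
    and "(\<lambda>n. U \<beta> n) \<sim>[at_top] (\<lambda>n. C * real n powr \<beta>)"
  shows "(\<lambda>(n, m). mutual_info (XY_pmf \<beta> n m))
           \<sim>[at_top \<times>\<^sub>F at_top]
         (\<lambda>(n, m). C * (real n powr \<beta> + real m powr \<beta> - real (n + m) powr \<beta>))"
  using filterlim_powr_add_gap_at_top[OF assms(1-3)]
  by (rule asymp_equiv_of_bounded_diff[where K = 3])
    (intro always_eventually allI, unfold split_beta, rule mutual_info_XY_pmf_error_bound[OF assms])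

end
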